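(* Let $n$ be an odd positive integer and $k$ an integer with $1<k<n$ and $\gcd(n,k)=\gcd(n,k-1)=1$. Then there is exactly one quasigroup operation on $\{1,2,\dots,n\}$ that is idempotent and $k$-translatable with respect to the ordering $1,2,\dots,n$.
   Context: A groupoid on $\{1,\dots,n\}$ is $k$-translatable with respect to the ordering $1,\dots,n$ if $i\cdot j=(i-1)\cdot(j-k)$ for all $i\in\{2,\dots,n\}$, $j\in\{1,\dots,n\}$, where $j-k$ is taken modulo $n$ in $\{1,\dots,n\}$. Idempotent means $x\cdot x=x$ for all $x$. *)

theory Defs
  imports Main
begin

definition closed_op :: "int set \<Rightarrow> (int \<Rightarrow> int \<Rightarrow> int) \<Rightarrow> bool" where
  "closed_op S op \<longleftrightarrow> (\<forall>x\<in>S. \<forall>y\<in>S. op x y \<in> S)"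

definition quasigroup_op :: "int set \<Rightarrow> (int \<Rightarrow> int \<Rightarrow> int) \<Rightarrow> bool" where
  "quasigroup_op S op \<longleftrightarrow> closed_op S op \<and>
     (\<forall>a\<in>S. \<forall>b\<in>S. (\<exists>!x. x \<in> S \<and> op a x = b) \<and> (\<exists>!y. y \<in> S \<and> op y a = b))"

definition idempotent_op :: "int set \<Rightarrow> (int \<Rightarrow> int \<Rightarrow> int) \<Rightarrow> bool" where
  "idempotent_op S op \<longleftrightarrow> (\<forall>x\<in>S. op x x = x)"

definition modn :: "int \<Rightarrow> int \<Rightarrow> int" where
  "modn n x = ((x - 1) mod n) + 1"

definition k_translatable :: "int \<Rightarrow> int \<Rightarrow> (int \<Rightarrow> int \<Rightarrow> int) \<Rightarrow> bool" where
  "k_translatable n k op \<longleftrightarrow>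
     (\<forall>i\<in>{2..n}. \<forall>j\<in>{1..n}. op i j = op (i - 1) (modn n (j - k)))"

end

theory Submission
  imports Defs "HOL-Number_Theory.Cong"
begin

text \<open>Translatability determines the whole table from its first row:
  \<open>i \<cdot> j = 1 \<cdot> (j - (i - 1) k)\<close>. Idempotence then forces \<open>1 \<cdot> ((1 - k) i + k) = i\<close>, and since
  \<open>1 - k\<close> is a unit modulo \<open>n\<close> this fixes the first row, whence uniqueness. Conversely, with
  \<open>u\<close> the inverse of \<open>1 - k\<close> modulo \<open>n\<close>, the operation \<open>i \<cdot> j = u (j - k i) mod n\<close> is
  translatable and idempotent, and it is a quasigroup because it is affine in each argument
  with the unit coefficients \<open>u\<close> and \<open>-u k\<close>.\<close>

lemma modn_in: "n > 0 \<Longrightarrow> modn n x \<in> {1..n}"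
  by (simp add: modn_def) (smt (verit) pos_mod_bound pos_mod_sign)

lemma modn_id: "x \<in> {1..n} \<Longrightarrow> modn n x = x"
  by (simp add: modn_def)

lemma modn_eq_iff_cong: "modn n x = modn n y \<longleftrightarrow> [x = y] (mod n)"
  unfolding modn_def cong_iff_dvd_diff by (simp add: mod_eq_dvd_iff)

lemma cong_modn: "[modn n x = x] (mod n)"
  by (simp add: modn_def cong_def mod_add_left_eq)

lemma cong_imp_eq_on_residues:
  fixes x y n :: int
  shows "x \<in> {1..n} \<Longrightarrow> y \<in> {1..n} \<Longrightarrow> [x = y] (mod n) \<Longrightarrow> x = y"
  using modn_eq_iff_cong[of n x y] modn_id[of x n] modn_id[of y n] by simp

lemma modn_affine_ex1:
  fixes c d :: int
  assumes "n > 0" and "coprime c n" and b: "b \<in> {1..n}"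
  shows "\<exists>!x. x \<in> {1..n} \<and> modn n (c * x + d) = b"
proof -
  obtain w where w: "[c * w = 1] (mod n)"
    using cong_solve_coprime_int[OF \<open>coprime c n\<close>] by blast
  show ?thesis
  proof (rule ex_ex1I)
    let ?x = "modn n (w * (b - d))"
    have "[c * ?x + d = c * (w * (b - d)) + d] (mod n)"
      by (intro cong_add cong_mult cong_modn cong_refl)
    also have "c * (w * (b - d)) + d = (c * w) * (b - d) + d"
      by (simp add: algebra_simps)
    also have "[(c * w) * (b - d) + d = 1 * (b - d) + d] (mod n)"
      by (intro cong_add cong_mult cong_refl w)
    finally have "modn n (c * ?x + d) = modn n b"
      by (simp add: modn_eq_iff_cong)
    then show "\<exists>x. x \<in> {1..n} \<and> modn n (c * x + d) = b"
      using modn_in[OF \<open>n > 0\<close>] modn_id[OF b] by auto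
  next
    fix x y
    assume "x \<in> {1..n} \<and> modn n (c * x + d) = b" "y \<in> {1..n} \<and> modn n (c * y + d) = b"
    moreover from this have "[c * x = c * y] (mod n)"
      by (metis modn_eq_iff_cong cong_add_rcancel)
    ultimately show "x = y"
      using cong_mult_lcancel[OF \<open>coprime c n\<close>] cong_imp_eq_on_residues by blast
  qed
qed

lemma quasigroup_op_modn_affine:
  fixes a b c :: int
  assumes "n > 0" and "coprime a n" and "coprime b n"
  shows "quasigroup_op {1..n} (\<lambda>x y. modn n (a * x + b * y + c))"
  unfolding quasigroup_op_def closed_op_def
proof (intro conjI ballI)
  fix x y show "modn n (a * x + b * y + c) \<in> {1..n}"
    using modn_in[OF \<open>n > 0\<close>] .
next
  fix x z assume "z \<in> {1..n}"
  have "\<exists>!y. y \<in> {1..n} \<and> modn n (b * y + (a * x + c)) = z"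
    using modn_affine_ex1 assms \<open>z \<in> {1..n}\<close> by blast
  then show "\<exists>!y. y \<in> {1..n} \<and> modn n (a * x + b * y + c) = z"
    by (simp add: algebra_simps)
  have "\<exists>!y. y \<in> {1..n} \<and> modn n (a * y + (b * x + c)) = z"
    using modn_affine_ex1 assms \<open>z \<in> {1..n}\<close> by blast
  then show "\<exists>!y. y \<in> {1..n} \<and> modn n (a * y + b * x + c) = z"
    by (simp add: algebra_simps)
qed

lemma k_translatable_modn_linear: "k_translatable n k (\<lambda>i j. modn n (u * (j - k * i)))"
  unfolding k_translatable_def
proof (intro ballI)
  fix i j :: int
  have "[u * (modn n (j - k) - k * (i - 1)) = u * ((j - k) - k * (i - 1))] (mod n)"
    by (intro cong_mult cong_diff cong_modn cong_refl)
  moreover have "u * ((j - k) - k * (i - 1)) = u * (j - k * i)"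
    by (simp add: algebra_simps)
  ultimately show "modn n (u * (j - k * i)) = modn n (u * (modn n (j - k) - k * (i - 1)))"
    by (simp add: modn_eq_iff_cong cong_sym)
qed

lemma idempotent_op_modn_linear:
  assumes u: "[(1 - k) * u = 1] (mod n)"
  shows "idempotent_op {1..n} (\<lambda>i j. modn n (u * (j - k * i)))"
  unfolding idempotent_op_def
proof
  fix x :: int assume x: "x \<in> {1..n}"
  have "[u * (x - k * x) = x * ((1 - k) * u)] (mod n)"
    by (simp add: algebra_simps)
  also have "[x * ((1 - k) * u) = x * 1] (mod n)"
    by (intro cong_mult cong_refl u)
  finally have "modn n (u * (x - k * x)) = modn n x"
    by (simp add: modn_eq_iff_cong)
  then show "modn n (u * (x - k * x)) = x"
    using modn_id[OF x] by simp
qed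

lemma k_translatable_first_row:
  assumes "k_translatable n k op" and "n > 0" and "i \<in> {1..n}" and "j \<in> {1..n}"
  shows "op i j = op 1 (modn n (j - (i - 1) * k))"
proof -
  from \<open>i \<in> {1..n}\<close> have "1 \<le> i" by simp
  then have "i \<le> n \<longrightarrow> (\<forall>j\<in>{1..n}. op i j = op 1 (modn n (j - (i - 1) * k)))"
  proof (induction i rule: int_ge_induct)
    case base
    then show ?case using modn_id by simp
  next
    case (step i)
    show ?case
    proof (intro impI ballI)
      fix j assume "i + 1 \<le> n" "j \<in> {1..n}"
      have "op (i + 1) j = op i (modn n (j - k))"
        using assms(1) step.hyps \<open>i + 1 \<le> n\<close> \<open>j \<in> {1..n}\<close> unfolding k_translatable_def by auto
      also have "\<dots> = op 1 (modn n (modn n (j - k) - (i - 1) * k))"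
        using step \<open>i + 1 \<le> n\<close> modn_in[OF \<open>n > 0\<close>] by auto
      also have "modn n (modn n (j - k) - (i - 1) * k) = modn n (j - (i + 1 - 1) * k)"
      proof -
        have "[modn n (j - k) - (i - 1) * k = (j - k) - (i - 1) * k] (mod n)"
          by (intro cong_diff cong_modn cong_refl)
        then show ?thesis
          by (simp add: modn_eq_iff_cong algebra_simps)
      qed
      finally show "op (i + 1) j = op 1 (modn n (j - (i + 1 - 1) * k))" .
    qed
  qed
  then show ?thesis using assms(3,4) by auto
qed

lemma idempotent_k_translatable_first_row:
  assumes "idempotent_op {1..n} op" and "k_translatable n k op" and "n > 0" and "i \<in> {1..n}"
  shows "op 1 (modn n ((1 - k) * i + k)) = i"
proof -
  have "modn n (i - (i - 1) * k) = modn n ((1 - k) * i + k)"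
    by (simp add: algebra_simps)
  then show ?thesis
    using k_translatable_first_row[OF assms(2,3,4,4)] assms(1,4)
    unfolding idempotent_op_def by simp
qed

lemma idempotent_k_translatable_unique:
  assumes "n > 0" and "coprime (1 - k) n"
    and "idempotent_op {1..n} op" and "k_translatable n k op"
    and "idempotent_op {1..n} op'" and "k_translatable n k op'"
    and "x \<in> {1..n}" and "y \<in> {1..n}"
  shows "op' x y = op x y"
proof -
  have first_row: "op' 1 t = op 1 t" if "t \<in> {1..n}" for t
  proof -
    obtain i where "i \<in> {1..n}" and "modn n ((1 - k) * i + k) = t"
      using modn_affine_ex1[OF \<open>n > 0\<close> \<open>coprime (1 - k) n\<close> \<open>t \<in> {1..n}\<close>] by blast
    then show ?thesis
      using idempotent_k_translatable_first_row assms(1,3-6) by metis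
  qed
  show ?thesis
    using k_translatable_first_row assms first_row modn_in by metis
qed

theorem corollary8p10:
  fixes n k :: int
  assumes "n > 0" and "odd n" and "1 < k" and "k < n"
    and "gcd n k = 1" and "gcd n (k - 1) = 1"
  shows "\<exists>op. quasigroup_op {1..n} op \<and> idempotent_op {1..n} op \<and> k_translatable n k op \<and>
           (\<forall>op'. quasigroup_op {1..n} op' \<and> idempotent_op {1..n} op' \<and> k_translatable n k op'
              \<longrightarrow> (\<forall>x\<in>{1..n}. \<forall>y\<in>{1..n}. op' x y = op x y))"
proof -
  have "coprime k n" and "coprime (1 - k) n"
    using assms(5,6) by (metis coprime_iff_gcd_eq_1 coprime_minus_left_iff gcd.commute minus_diff_eq)+
  obtain u where u: "[(1 - k) * u = 1] (mod n)"
    using cong_solve_coprime_int[OF \<open>coprime (1 - k) n\<close>] by blast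
  then have "coprime u n"
    using coprime_iff_invertible_int by (metis mult.commute)
  define op where "op = (\<lambda>i j. modn n (u * (j - k * i)))"
  have "quasigroup_op {1..n} (\<lambda>i j. modn n ((- (u * k)) * i + u * j + 0))"
    using \<open>n > 0\<close> \<open>coprime u n\<close> \<open>coprime k n\<close> by (intro quasigroup_op_modn_affine) auto
  then have "quasigroup_op {1..n} op"
    unfolding op_def by (simp add: algebra_simps)
  moreover have "idempotent_op {1..n} op" and "k_translatable n k op"
    unfolding op_def using idempotent_op_modn_linear[OF u] k_translatable_modn_linear by simp_all
  ultimately show ?thesis
    using idempotent_k_translatable_unique[OF \<open>n > 0\<close> \<open>coprime (1 - k) n\<close>] by blast
qed

end
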